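(* Let $p,q$ be odd positive integers with $\gcd(p,q)=1$ and $p/q-1\in(-1,1)$. Then \[ \mathcal{O}(p/q)=\{\pm A(4\ell^2/q^2):\ \ell\in\{0,1,\dots,(q-1)/2\}\} \] and \[ \mathcal{E}(p/q)=\{\pm A((2\ell+1)^2/q^2):\ \ell\in\{0,1,\dots,(q-3)/2\}\}. \]
   Context: Nodes: $x_{k,n}:=2k/n-1$, $k=0,\dots,n$; $D_n(x)=\sum_{k=0}^n(-1)^k\frac{1}{x-x_{k,n}}$. $A(y)=\sum_{k=0}^\infty(-1)^k\frac{4k+2}{(2k+1)^2-y}$ for $y\in[0,1)$. A sequence $n_j$ is a strictly increasing map $\mathbb{N}\to\mathbb{N}$, odd (even) if all $n_j$ are odd (even); $x$ is regular for $n_j$ if there is $j_0$ with $x\notin\{x_{0,n_j},\dots,x_{n_j,n_j}\}$ for $j\ge j_0$. For a rational $r$ with $x=r-1\in(-1,1)$, $\mathcal{O}(r)$ is the set of $L\in\overline{\mathbb{R}}=\mathbb{R}\cup\{\pm\infty\}$ such that $\lim_{j\to\infty}D_{n_j}(x)/n_j=L$ for some odd sequence $n_j$ for which $x$ is regular; $\mathcal{E}(r)$ is defined likewise with even sequences. *)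

theory Defs
  imports "HOL-Analysis.Analysis" "HOL-Library.Extended_Real"
begin

definition node :: "nat \<Rightarrow> nat \<Rightarrow> real" where
  "node k n = 2 * real k / real n - 1"

definition D :: "nat \<Rightarrow> real \<Rightarrow> real" where
  "D n x = (\<Sum>k=0..n. (-1) ^ k * (1 / (x - node k n)))"

definition A :: "real \<Rightarrow> real" where
  "A y = (\<Sum>k. (-1) ^ k * ((4 * real k + 2) / ((2 * real k + 1)^2 - y)))"

definition regular :: "real \<Rightarrow> (nat \<Rightarrow> nat) \<Rightarrow> bool" where
  "regular x nj \<longleftrightarrow> (\<exists>j0. \<forall>j\<ge>j0. x \<notin> {node k (nj j) | k. k \<le> nj j})"

definition limit_set :: "(nat \<Rightarrow> bool) \<Rightarrow> real \<Rightarrow> ereal set" where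
  "limit_set par r = {L. \<exists>nj. strict_mono nj \<and> (\<forall>j. par (nj j)) \<and> regular (r - 1) nj \<and>
      ((\<lambda>j. ereal (D (nj j) (r - 1) / real (nj j))) \<longlonglongrightarrow> L)}"

definition Oset :: "real \<Rightarrow> ereal set" where
  "Oset r = limit_set odd r"

definition Eset :: "real \<Rightarrow> ereal set" where
  "Eset r = limit_set even r"

end

theory Submission
  imports Defs "HOL-Real_Asymp.Real_Asymp"
begin

(* Write p n = 2 q K + r with 0 \<le> r < 2 q, so that n (x + 1) = 2 K + t with t = r / q;
   x is a node of the n-th grid exactly when r = 0. Otherwise, splitting D_n(x) / n at x and
   reflecting the left half gives (-1)^K times a sum of two alternating series with terms
   1 / (2 j + t) and 1 / (2 j + 2 - t), truncated at K + 1 and n - K, which both tend to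
   infinity with n. The complete series add up to A((1 - t)^2), because
   (2 j + 1)^2 - (1 - t)^2 = (2 j + t)(2 j + 2 - t), and the sign (-1)^K only depends on
   p n mod 4 q. So the possible limits are +-A((1 - r/q)^2), attained along the residue classes
   of p n mod 4 q; as p is a unit mod 4 q, every class of the parity of n occurs. Finally
   |q - r| runs through the even (odd) numbers below q as r runs through the odd (even)
   numbers in (0, 2 q). *)

lemma summable_alternating_reciprocal:
  fixes c :: real
  assumes "c > 0"
  shows "summable (\<lambda>j. (-1) ^ j / (2 * real j + c))"
proof -
  have "summable (\<lambda>j. (-1) ^ j * (1 / (2 * real j + c)))"
  proof (rule summable_Leibniz(1))
    show "(\<lambda>j. 1 / (2 * real j + c)) \<longlonglongrightarrow> 0"
      by real_asymp
    show "monoseq (\<lambda>j. 1 / (2 * real j + c))"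
      using assms by (auto simp: monoseq_Suc intro!: divide_left_mono)
  qed
  then show ?thesis
    by simp
qed

lemma A_eq_alternating_series_sum:
  fixes t :: real
  assumes "0 < t" "t < 2"
  shows "A ((1 - t)\<^sup>2) =
    (\<Sum>j. (-1) ^ j / (2 * real j + t)) + (\<Sum>j. (-1) ^ j / (2 * real j + (2 - t)))"
proof -
  have "(-1) ^ j / (2 * real j + t) + (-1) ^ j / (2 * real j + (2 - t)) =
        (-1) ^ j * ((4 * real j + 2) / ((2 * real j + 1)\<^sup>2 - (1 - t)\<^sup>2))" for j
  proof -
    have "(2 * real j + 1)\<^sup>2 - (1 - t)\<^sup>2 = (2 * real j + t) * (2 * real j + (2 - t))"
      by (simp add: power2_eq_square algebra_simps)
    moreover have "2 * real j + t > 0" "2 * real j + (2 - t) > 0"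
      using assms by auto
    ultimately show ?thesis
      by (simp add: field_simps)
  qed
  then show ?thesis
    unfolding A_def
    using suminf_add[OF summable_alternating_reciprocal summable_alternating_reciprocal] assms
    by simp
qed

lemma tendsto_add_partial_sums:
  fixes a b :: "nat \<Rightarrow> real"
  assumes "summable a" "summable b" "filterlim K at_top F" "filterlim M at_top F"
  shows "((\<lambda>x. (\<Sum>i\<le>K x. a i) + (\<Sum>i<M x. b i)) \<longlongrightarrow> suminf a + suminf b) F"
  using filterlim_compose[OF summable_LIMSEQ'[OF assms(1)] assms(3)]
    filterlim_compose[OF summable_LIMSEQ[OF assms(2)] assms(4)]
  by (intro tendsto_add) (simp_all add: o_def)

lemma D_div_eq_alternating_split:
  fixes x t :: real
  assumes "0 < n" "K \<le> n" "real n * (x + 1) = 2 * real K + t"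
  shows "D n x / real n = (-1) ^ K *
    ((\<Sum>j\<le>K. (-1) ^ j / (2 * real j + t)) + (\<Sum>i<n - K. (-1) ^ i / (2 * real i + (2 - t))))"
proof -
  define g where "g k = (-1) ^ k / (2 * real K + t - 2 * real k)" for k
  have "x - node k n = (2 * real K + t - 2 * real k) / real n" for k
    using assms by (simp add: node_def field_simps)
  then have "D n x / real n = (\<Sum>k=0..K + (n - K). g k)"
    using assms by (simp add: D_def g_def sum_divide_distrib)
  also have "\<dots> = (\<Sum>k=0..K. g k) + (\<Sum>k=K+1..K + (n - K). g k)"
    by (rule sum.ub_add_nat) simp
  also have "(\<Sum>k=0..K. g k) = (\<Sum>j\<le>K. (-1) ^ K * ((-1) ^ j / (2 * real j + t)))"
    unfolding atMost_atLeast0 sum.atLeastAtMost_rev[of g 0 K]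
  proof (rule sum.cong)
    fix j assume "j \<in> {0..K}"
    then show "g (K + 0 - j) = (-1) ^ K * ((-1) ^ j / (2 * real j + t))"
      by (auto simp: g_def minus_one_power_iff)
  qed simp
  also have "(\<Sum>k=K+1..K + (n - K). g k) =
      (\<Sum>i<n - K. (-1) ^ K * ((-1) ^ i / (2 * real i + (2 - t))))"
  proof -
    have "(\<Sum>k=K+1..K + (n - K). g k) = (\<Sum>k=0 + (K+1)..<(n - K) + (K+1). g k)"
      by (intro sum.cong) auto
    also have "\<dots> = (\<Sum>i<n - K. g (i + (K + 1)))"
      by (simp only: sum.shift_bounds_nat_ivl atLeast0LessThan)
    also have "\<dots> = (\<Sum>i<n - K. (-1) ^ K * ((-1) ^ i / (2 * real i + (2 - t))))"
      by (intro sum.cong) (simp_all add: g_def power_add algebra_simps flip: divide_minus_right)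
    finally show ?thesis .
  qed
  finally show ?thesis
    by (simp add: sum_distrib_left distrib_left)
qed

lemma filterlim_at_top_linear_bound:
  fixes n m :: "nat \<Rightarrow> nat"
  assumes "filterlim n at_top sequentially" "\<And>j. n j \<le> c * m j + c"
  shows "filterlim m at_top sequentially"
  unfolding filterlim_at_top
proof
  fix Z
  have "\<forall>\<^sub>F j in sequentially. c * Z + c + 1 \<le> n j"
    using assms(1) unfolding filterlim_at_top by blast
  then show "\<forall>\<^sub>F j in sequentially. Z \<le> m j"
  proof (rule eventually_mono)
    fix j assume "c * Z + c + 1 \<le> n j"
    then have "c * Z < c * m j"
      using assms(2)[of j] by linarith
    then show "Z \<le> m j"
      by simp
  qed
qed

lemma finite_range_constant_subseq:
  fixes f :: "nat \<Rightarrow> 'a"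
  assumes "finite (range f)"
  obtains e :: "nat \<Rightarrow> nat" and c where "strict_mono e" "\<And>i. f (e i) = c"
proof -
  obtain j0 where inf: "infinite {j. f j = f j0}"
    using pigeonhole_infinite[of UNIV f] assms by auto
  show ?thesis
  proof (rule that)
    show "strict_mono (enumerate {j. f j = f j0})"
      by (rule strict_mono_enumerate[OF inf])
    show "f (enumerate {j. f j = f j0} i) = f j0" for i
      using enumerate_in_set[OF inf] by simp
  qed
qed

lemma mod_double_div_eq:
  fixes a b :: int
  assumes "0 < b"
  shows "a mod (2 * b) div b = a div b mod 2"
proof -
  have "a mod (2 * b) = b * (a div b mod 2) + a mod b"
    using zmod_zmult2_eq[of 2 a b] by (simp add: mult.commute)
  then show ?thesis
    using assms by simp
qed

lemma mod_mod_double: "(a::int) mod (4 * b) mod (2 * b) = a mod (2 * b)"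
proof -
  have "2 * b dvd 4 * b"
    by (metis dvd_triv_right mult.assoc numeral_Bit0_eq_double)
  then show ?thesis
    by (rule mod_mod_cancel)
qed

lemma abs_offsets_odd:
  fixes q :: int
  assumes "odd q"
  shows "{\<bar>q - r\<bar> | r. 0 < r \<and> r < 2 * q \<and> odd r} = (\<lambda>l. 2 * l) ` {0 .. (q - 1) div 2}"
proof (intro set_eqI iffI)
  fix d assume "d \<in> {\<bar>q - r\<bar> | r. 0 < r \<and> r < 2 * q \<and> odd r}"
  then obtain r where d: "d = \<bar>q - r\<bar>" and r: "0 < r" "r < 2 * q" "odd r"
    by blast
  have "d = 2 * (d div 2)" "d \<le> q - 1"
    using d r assms by (auto simp: abs_if elim!: oddE)
  then show "d \<in> (\<lambda>l. 2 * l) ` {0 .. (q - 1) div 2}"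
    using d by (intro image_eqI[of d _ "d div 2"]) auto
next
  fix d assume "d \<in> (\<lambda>l. 2 * l) ` {0 .. (q - 1) div 2}"
  then obtain l where "d = 2 * l" "0 \<le> l" "l \<le> (q - 1) div 2"
    by auto
  then show "d \<in> {\<bar>q - r\<bar> | r. 0 < r \<and> r < 2 * q \<and> odd r}"
    using assms by (intro CollectI exI[of _ "q - 2 * l"]) auto
qed

lemma abs_offsets_even:
  fixes q :: int
  assumes "odd q"
  shows "{\<bar>q - r\<bar> | r. 0 < r \<and> r < 2 * q \<and> even r} = (\<lambda>l. 2 * l + 1) ` {0 .. (q - 3) div 2}"
proof (intro set_eqI iffI)
  fix d assume "d \<in> {\<bar>q - r\<bar> | r. 0 < r \<and> r < 2 * q \<and> even r}"
  then obtain r where d: "d = \<bar>q - r\<bar>" and r: "0 < r" "r < 2 * q" "even r"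
    by blast
  have "d = 2 * (d div 2) + 1" "d \<le> q - 2"
    using d r assms by (auto simp: abs_if elim!: oddE evenE)
  then show "d \<in> (\<lambda>l. 2 * l + 1) ` {0 .. (q - 3) div 2}"
    using d by (intro image_eqI[of d _ "d div 2"]) auto
next
  fix d assume "d \<in> (\<lambda>l. 2 * l + 1) ` {0 .. (q - 3) div 2}"
  then obtain l where "d = 2 * l + 1" "0 \<le> l" "l \<le> (q - 3) div 2"
    by auto
  then show "d \<in> {\<bar>q - r\<bar> | r. 0 < r \<and> r < 2 * q \<and> even r}"
    using assms by (intro CollectI exI[of _ "q - 2 * l - 1"]) auto
qed

locale rational_point =
  fixes p q :: int
  assumes p_pos: "0 < p" and p_less: "p < 2 * q" and odd_p: "odd p" and coprime_pq: "coprime p q"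
begin

definition x :: real where
  "x = real_of_int p / real_of_int q - 1"

lemma q_pos: "0 < q"
  using p_pos p_less by simp

lemma mod_2q_bounds:
  assumes "\<rho> mod (2 * q) \<noteq> 0"
  shows "0 < \<rho> mod (2 * q)" "\<rho> mod (2 * q) < 2 * q"
  using assms q_pos pos_mod_sign[of "2 * q" \<rho>] pos_mod_bound[of "2 * q" \<rho>] by linarith+

lemma scaled_point: "real n * (x + 1) = real_of_int (p * int n) / real_of_int q"
  by (simp add: x_def)

lemma is_node_iff:
  assumes "0 < n"
  shows "x \<in> {node k n | k. k \<le> n} \<longleftrightarrow> (p * int n) mod (2 * q) = 0"
proof -
  have node_iff: "x = node k n \<longleftrightarrow> p * int n = 2 * q * int k" for k
  proof -
    have "x = node k n \<longleftrightarrow> real_of_int p * real n = 2 * real k * real_of_int q"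
      using q_pos assms by (simp add: x_def node_def field_simps)
    also have "\<dots> \<longleftrightarrow> real_of_int (p * int n) = real_of_int (2 * q * int k)"
      by (simp add: ac_simps)
    also have "\<dots> \<longleftrightarrow> p * int n = 2 * q * int k"
      by (rule of_int_eq_iff)
    finally show ?thesis .
  qed
  show ?thesis
  proof
    assume "x \<in> {node k n | k. k \<le> n}"
    then show "(p * int n) mod (2 * q) = 0"
      using node_iff by auto
  next
    assume "(p * int n) mod (2 * q) = 0"
    then have k: "p * int n = 2 * q * (p * int n div (2 * q))"
      by (metis add_0_right mult_div_mod_eq)
    have "2 * q * (p * int n div (2 * q)) < 2 * q * int n"
      using assms p_less k by simp
    then have "p * int n div (2 * q) \<le> int n"
      using q_pos by (simp add: mult_less_cancel_left_pos)
    moreover have "0 \<le> p * int n div (2 * q)"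
      using p_pos q_pos by (simp add: pos_imp_zdiv_nonneg_iff)
    ultimately show "x \<in> {node k n | k. k \<le> n}"
      using node_iff[of "nat (p * int n div (2 * q))"] k by auto
  qed
qed

lemma odd_residue_iff: "odd ((p * int n) mod (4 * q)) \<longleftrightarrow> odd n"
proof -
  have "even ((p * int n) mod (4 * q)) \<longleftrightarrow> even (p * int n)"
    by (simp add: dvd_mod_iff)
  then show ?thesis
    using odd_p by simp
qed

lemma residue_quotient:
  assumes "(p * int n) mod (4 * q) = \<rho>"
  shows "p * int n = 2 * q * int (nat (p * int n div (2 * q))) + \<rho> mod (2 * q)"
    and "(-1::real) ^ nat (p * int n div (2 * q)) = (-1) ^ nat (\<rho> div (2 * q))"
proof -
  have quotient: "int (nat (p * int n div (2 * q))) = p * int n div (2 * q)"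
    using p_pos q_pos by (simp add: pos_imp_zdiv_nonneg_iff)
  have "(p * int n) mod (2 * q) = \<rho> mod (2 * q)"
    using assms mod_mod_double[of "p * int n" q] by simp
  then show "p * int n = 2 * q * int (nat (p * int n div (2 * q))) + \<rho> mod (2 * q)"
    using mult_div_mod_eq[of "2 * q" "p * int n"] quotient by simp
  have "\<rho> div (2 * q) = int (nat (p * int n div (2 * q))) mod 2"
    using mod_double_div_eq[of "2 * q" "p * int n"] q_pos assms quotient by simp
  then show "(-1::real) ^ nat (p * int n div (2 * q)) = (-1) ^ nat (\<rho> div (2 * q))"
    by (simp add: minus_one_power_iff nat_mod_distrib even_nat_iff)
qed

lemma quotient_bounds:
  assumes decomp: "p * int n = 2 * q * int K + r" and r: "0 < r" "r < 2 * q"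
  shows "0 < n" "K \<le> n"
    and "n \<le> nat (2 * q) * K + nat (2 * q)" "n \<le> nat (2 * q) * (n - K) + nat (2 * q)"
proof -
  have "0 \<le> 2 * q * int K"
    using q_pos by simp
  then have "0 < p * int n"
    using decomp r by linarith
  then show n_pos: "0 < n"
    by (simp add: zero_less_mult_iff)
  have "int n \<le> p * int n" "p * int n \<le> (2 * q - 1) * int n"
    using mult_right_mono[of 1 p "int n"] mult_right_mono[of p "2 * q - 1" "int n"] p_pos p_less
    by simp_all
  then have lower: "int n \<le> 2 * q * int K + 2 * q" and upper: "int n \<le> 2 * q * (int n - int K)"
    using decomp r by (simp_all add: algebra_simps)
  then have "0 < 2 * q * (int n - int K)"
    using n_pos by linarith
  then show K_le: "K \<le> n"
    using q_pos by (simp add: zero_less_mult_iff)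
  have "int n \<le> int (nat (2 * q) * K + nat (2 * q))"
    using lower q_pos by simp
  then show "n \<le> nat (2 * q) * K + nat (2 * q)"
    by (simp only: of_nat_le_iff)
  have "int n \<le> int (nat (2 * q) * (n - K) + nat (2 * q))"
    using upper q_pos K_le by simp
  then show "n \<le> nat (2 * q) * (n - K) + nat (2 * q)"
    by (simp only: of_nat_le_iff)
qed

definition residue_limit :: "int \<Rightarrow> real" where
  "residue_limit \<rho> =
     (-1) ^ nat (\<rho> div (2 * q)) * A ((1 - real_of_int (\<rho> mod (2 * q)) / real_of_int q)\<^sup>2)"

lemma tendsto_residue_limit:
  assumes lim: "filterlim n at_top sequentially"
    and residue: "\<And>j. (p * int (n j)) mod (4 * q) = \<rho>" and off_node: "\<rho> mod (2 * q) \<noteq> 0"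
  shows "(\<lambda>j. D (n j) x / real (n j)) \<longlonglongrightarrow> residue_limit \<rho>"
proof -
  define r where "r = \<rho> mod (2 * q)"
  define t where "t = real_of_int r / real_of_int q"
  define K where "K j = nat (p * int (n j) div (2 * q))" for j
  define \<sigma> :: real where "\<sigma> = (-1) ^ nat (\<rho> div (2 * q))"
  have r: "0 < r" "r < 2 * q"
    using mod_2q_bounds[OF off_node] unfolding r_def .
  have t: "0 < t" "t < 2"
    using r q_pos unfolding t_def by (simp_all add: field_simps)
  have decomp: "p * int (n j) = 2 * q * int (K j) + r" and sign: "(-1) ^ K j = \<sigma>" for j
    using residue_quotient[OF residue[of j]] unfolding r_def K_def \<sigma>_def by simp_all
  note bounds = quotient_bounds[OF decomp r]
  have split: "D (n j) x / real (n j) =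
      \<sigma> * ((\<Sum>i\<le>K j. (-1) ^ i / (2 * real i + t)) +
        (\<Sum>i<n j - K j. (-1) ^ i / (2 * real i + (2 - t))))"
    for j
  proof -
    have "real (n j) * (x + 1) = 2 * real (K j) + t"
      using q_pos unfolding scaled_point decomp t_def by (simp add: field_simps)
    from D_div_eq_alternating_split[OF bounds(1,2) this] show ?thesis
      unfolding sign .
  qed
  have "filterlim K at_top sequentially" "filterlim (\<lambda>j. n j - K j) at_top sequentially"
    using bounds(3,4) by (auto intro: filterlim_at_top_linear_bound[OF lim])
  then have "(\<lambda>j. \<sigma> * ((\<Sum>i\<le>K j. (-1) ^ i / (2 * real i + t)) +
      (\<Sum>i<n j - K j. (-1) ^ i / (2 * real i + (2 - t))))) \<longlonglongrightarrow> \<sigma> * A ((1 - t)\<^sup>2)"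
    unfolding A_eq_alternating_series_sum[OF t] using t
    by (intro tendsto_mult_left tendsto_add_partial_sums summable_alternating_reciprocal) simp_all
  then show ?thesis
    unfolding split residue_limit_def \<sigma>_def t_def r_def .
qed

definition admissible_residues :: "bool \<Rightarrow> int set" where
  "admissible_residues b = {\<rho>. 0 \<le> \<rho> \<and> \<rho> < 4 * q \<and> \<rho> mod (2 * q) \<noteq> 0 \<and> odd \<rho> = b}"

lemma limit_set_subset_residue_limits:
  "limit_set (\<lambda>n. odd n = b) (real_of_int p / real_of_int q) \<subseteq>
     (\<lambda>\<rho>. ereal (residue_limit \<rho>)) ` admissible_residues b"
proof
  fix L assume "L \<in> limit_set (\<lambda>n. odd n = b) (real_of_int p / real_of_int q)"
  then obtain n where mono: "strict_mono n" and parity: "\<And>j. odd (n j) = b" and reg: "regular x n"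
    and lim: "(\<lambda>j. ereal (D (n j) x / real (n j))) \<longlonglongrightarrow> L"
    unfolding limit_set_def x_def by blast
  define res where "res j = (p * int (n j)) mod (4 * q)" for j
  have "finite (range res)"
    by (rule finite_subset[of _ "{0..<4 * q}"]) (auto simp: res_def q_pos)
  then obtain e :: "nat \<Rightarrow> nat" and \<rho>
    where e_mono: "strict_mono e" and e_res: "\<And>i. res (e i) = \<rho>"
    using finite_range_constant_subseq by metis
  have off_node: "\<rho> mod (2 * q) \<noteq> 0"
  proof
    assume "\<rho> mod (2 * q) = 0"
    from reg obtain j1 where j1: "\<And>j. j1 \<le> j \<Longrightarrow> x \<notin> {node k (n j) | k. k \<le> n j}"
      unfolding regular_def by blast
    define j where "j = e (Suc j1)"
    have "Suc j1 \<le> j" "j \<le> n j"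
      unfolding j_def using seq_suble[OF e_mono] seq_suble[OF mono] by auto
    moreover have "(p * int (n j)) mod (2 * q) = 0"
      using e_res[of "Suc j1"] \<open>\<rho> mod (2 * q) = 0\<close> mod_mod_double[of _ q]
      unfolding j_def res_def by metis
    ultimately show False
      using j1[of j] is_node_iff[of "n j"] by auto
  qed
  have "(\<lambda>i. D ((n \<circ> e) i) x / real ((n \<circ> e) i)) \<longlonglongrightarrow> residue_limit \<rho>"
    using e_res off_node unfolding res_def
    by (intro tendsto_residue_limit filterlim_subseq strict_mono_o mono e_mono) simp_all
  then have "(\<lambda>i. ereal (D (n (e i)) x / real (n (e i)))) \<longlonglongrightarrow> ereal (residue_limit \<rho>)"
    by simp
  moreover have "(\<lambda>i. ereal (D (n (e i)) x / real (n (e i)))) \<longlonglongrightarrow> L"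
    using LIMSEQ_subseq_LIMSEQ[OF lim e_mono] by (simp add: o_def)
  ultimately have "L = ereal (residue_limit \<rho>)"
    using LIMSEQ_unique by blast
  moreover have "\<rho> \<in> admissible_residues b"
    using e_res[of 0] off_node odd_residue_iff parity q_pos
    unfolding admissible_residues_def res_def by auto
  ultimately show "L \<in> (\<lambda>\<rho>. ereal (residue_limit \<rho>)) ` admissible_residues b"
    by blast
qed

lemma residue_class_sequence:
  assumes "0 \<le> \<rho>" "\<rho> < 4 * q"
  obtains n :: "nat \<Rightarrow> nat" where "strict_mono n" "\<And>j. (p * int (n j)) mod (4 * q) = \<rho>"
proof -
  have "coprime p (4 * q)"
    using coprime_pq odd_p coprime_power_right_iff[of p 2 2] by simp
  then obtain u v where "u * p + v * (4 * q) = 1"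
    by (metis bezout_int coprime_iff_gcd_eq_1)
  then have "p * u = 1 + (- v) * (4 * q)"
    by (simp add: algebra_simps)
  then have "(p * (u mod (4 * q))) mod (4 * q) = (1 + (- v) * (4 * q)) mod (4 * q)"
    by (simp only: mod_mult_right_eq)
  then have inverse: "(p * (u mod (4 * q))) mod (4 * q) = 1"
    using q_pos by (simp only: mod_mult_self1) simp
  define n where "n j = nat (u mod (4 * q) * \<rho>) + nat (4 * q) * Suc j" for j
  show ?thesis
  proof
    show "strict_mono n"
      using q_pos by (simp add: strict_mono_Suc_iff n_def)
    fix j
    have "p * int (n j) = (p * (u mod (4 * q))) * \<rho> + p * int (Suc j) * (4 * q)"
      using q_pos assms(1) by (simp add: n_def algebra_simps)
    then have "(p * int (n j)) mod (4 * q) = ((p * (u mod (4 * q))) mod (4 * q) * \<rho>) mod (4 * q)"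
      by (simp add: mod_mult_left_eq)
    then show "(p * int (n j)) mod (4 * q) = \<rho>"
      using inverse assms by simp
  qed
qed

lemma residue_limit_in_limit_set:
  assumes "\<rho> \<in> admissible_residues b"
  shows "ereal (residue_limit \<rho>) \<in> limit_set (\<lambda>n. odd n = b) (real_of_int p / real_of_int q)"
proof -
  have \<rho>: "0 \<le> \<rho>" "\<rho> < 4 * q" "\<rho> mod (2 * q) \<noteq> 0" "odd \<rho> = b"
    using assms by (simp_all add: admissible_residues_def)
  obtain n :: "nat \<Rightarrow> nat"
    where mono: "strict_mono n" and residue: "\<And>j. (p * int (n j)) mod (4 * q) = \<rho>"
    using residue_class_sequence[OF \<rho>(1,2)] by blast
  have "regular x n"
    unfolding regular_def
  proof (intro exI allI impI)
    fix j
    have "0 < n j"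
      using residue[of j] \<rho>(3) by (cases "n j") auto
    moreover have "(p * int (n j)) mod (2 * q) \<noteq> 0"
      using residue[of j] \<rho>(3) mod_mod_double[of "p * int (n j)" q] by simp
    ultimately show "x \<notin> {node k (n j) | k. k \<le> n j}"
      using is_node_iff by blast
  qed
  moreover have "(\<lambda>j. ereal (D (n j) x / real (n j))) \<longlonglongrightarrow> ereal (residue_limit \<rho>)"
    using tendsto_residue_limit[OF filterlim_subseq[OF mono] residue \<rho>(3)] by simp
  moreover have "odd (n j) = b" for j
    using odd_residue_iff[of "n j"] residue[of j] \<rho>(4) by simp
  ultimately show ?thesis
    using mono unfolding limit_set_def x_def by blast
qed

definition limit_arguments :: "bool \<Rightarrow> real set" where
  "limit_arguments b =
     (\<lambda>r. (1 - real_of_int r / real_of_int q)\<^sup>2) ` {r. 0 < r \<and> r < 2 * q \<and> odd r = b}"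

lemma residue_limits_eq:
  "(\<lambda>\<rho>. ereal (residue_limit \<rho>)) ` admissible_residues b =
     (\<lambda>y. ereal (A y)) ` limit_arguments b \<union> (\<lambda>y. - ereal (A y)) ` limit_arguments b"
proof (intro set_eqI iffI)
  fix z assume "z \<in> (\<lambda>\<rho>. ereal (residue_limit \<rho>)) ` admissible_residues b"
  then obtain \<rho> where z: "z = ereal (residue_limit \<rho>)"
    and \<rho>: "0 \<le> \<rho>" "\<rho> < 4 * q" "\<rho> mod (2 * q) \<noteq> 0" "odd \<rho> = b"
    by (auto simp: admissible_residues_def)
  define r where "r = \<rho> mod (2 * q)"
  have "0 < r" "r < 2 * q" "odd r = b"
    using mod_2q_bounds[OF \<rho>(3)] \<rho>(4) unfolding r_def by (simp_all add: dvd_mod_iff)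
  then have y: "(1 - real_of_int r / real_of_int q)\<^sup>2 \<in> limit_arguments b"
    by (auto simp: limit_arguments_def)
  have "2 * q * (\<rho> div (2 * q)) < 2 * q * 2"
    using \<rho>(2) pos_mod_sign[of "2 * q" \<rho>] mult_div_mod_eq[of "2 * q" \<rho>] q_pos by linarith
  then have "\<rho> div (2 * q) < 2"
    using q_pos by (simp add: mult_less_cancel_left_pos)
  moreover have "0 \<le> \<rho> div (2 * q)"
    using \<rho>(1) q_pos by (simp add: pos_imp_zdiv_nonneg_iff)
  ultimately have "\<rho> div (2 * q) = 0 \<or> \<rho> div (2 * q) = 1"
    by linarith
  then show "z \<in> (\<lambda>y. ereal (A y)) ` limit_arguments b \<union> (\<lambda>y. - ereal (A y)) ` limit_arguments b"
    using z y unfolding residue_limit_def r_def by auto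
next
  fix z assume "z \<in> (\<lambda>y. ereal (A y)) ` limit_arguments b \<union> (\<lambda>y. - ereal (A y)) ` limit_arguments b"
  then obtain r where r: "0 < r" "r < 2 * q" "odd r = b"
    and z: "z = ereal (A ((1 - real_of_int r / real_of_int q)\<^sup>2)) \<or>
            z = - ereal (A ((1 - real_of_int r / real_of_int q)\<^sup>2))"
    by (auto simp: limit_arguments_def)
  have "r \<in> admissible_residues b" "r + 2 * q \<in> admissible_residues b"
    using r by (auto simp: admissible_residues_def)
  moreover have "residue_limit r = A ((1 - real_of_int r / real_of_int q)\<^sup>2)"
    "residue_limit (r + 2 * q) = - A ((1 - real_of_int r / real_of_int q)\<^sup>2)"
    using r by (simp_all add: residue_limit_def)
  moreover have "z = ereal (residue_limit r) \<or> z = ereal (residue_limit (r + 2 * q))"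
    using z calculation(3,4) by auto
  ultimately show "z \<in> (\<lambda>\<rho>. ereal (residue_limit \<rho>)) ` admissible_residues b"
    by blast
qed

theorem limit_set_eq:
  "limit_set (\<lambda>n. odd n = b) (real_of_int p / real_of_int q) =
     (\<lambda>y. ereal (A y)) ` limit_arguments b \<union> (\<lambda>y. - ereal (A y)) ` limit_arguments b"
  unfolding residue_limits_eq[symmetric]
  using limit_set_subset_residue_limits residue_limit_in_limit_set by blast

lemma limit_arguments_eq_abs_offsets:
  "limit_arguments b = (\<lambda>d. real_of_int d ^ 2 / real_of_int q ^ 2) `
     {\<bar>q - r\<bar> | r. 0 < r \<and> r < 2 * q \<and> odd r = b}"
proof -
  have "(1 - real_of_int r / real_of_int q)\<^sup>2 = real_of_int \<bar>q - r\<bar> ^ 2 / real_of_int q ^ 2" for r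
  proof -
    have "1 - real_of_int r / real_of_int q = real_of_int (q - r) / real_of_int q"
      using q_pos by (simp add: field_simps)
    then show ?thesis
      by (simp add: power_divide)
  qed
  then show ?thesis
    unfolding limit_arguments_def setcompr_eq_image image_image by simp
qed

lemma limit_arguments_odd:
  assumes "odd q"
  shows "limit_arguments True = (\<lambda>l. 4 * real_of_int l ^ 2 / real_of_int q ^ 2) ` {0 .. (q - 1) div 2}"
  unfolding limit_arguments_eq_abs_offsets using abs_offsets_odd[OF assms]
  by (simp add: image_image power_mult_distrib)

lemma limit_arguments_even:
  assumes "odd q"
  shows "limit_arguments False =
    (\<lambda>l. (2 * real_of_int l + 1) ^ 2 / real_of_int q ^ 2) ` {0 .. (q - 3) div 2}"
  unfolding limit_arguments_eq_abs_offsets using abs_offsets_even[OF assms]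
  by (simp add: image_image)

end

theorem corollary3:
  fixes p q :: int
  assumes "p > 0" "q > 0" "odd p" "odd q" "gcd p q = 1"
    and "-1 < real_of_int p / real_of_int q - 1" "real_of_int p / real_of_int q - 1 < 1"
  shows "Oset (real_of_int p / real_of_int q) =
           {ereal (A (4 * real_of_int l ^ 2 / real_of_int q ^ 2)) | l. l \<in> {0 .. (q - 1) div 2}} \<union>
           {- ereal (A (4 * real_of_int l ^ 2 / real_of_int q ^ 2)) | l. l \<in> {0 .. (q - 1) div 2}} \<and>
         Eset (real_of_int p / real_of_int q) =
           {ereal (A ((2 * real_of_int l + 1) ^ 2 / real_of_int q ^ 2)) | l. l \<in> {0 .. (q - 3) div 2}} \<union>
           {- ereal (A ((2 * real_of_int l + 1) ^ 2 / real_of_int q ^ 2)) | l. l \<in> {0 .. (q - 3) div 2}}"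
proof -
  have "real_of_int p < 2 * real_of_int q"
    using assms(2,7) by (simp add: divide_less_eq)
  then interpret rational_point p q
    using assms by unfold_locales (simp_all add: coprime_iff_gcd_eq_1)
  have "Oset (real_of_int p / real_of_int q) =
      limit_set (\<lambda>n. odd n = True) (real_of_int p / real_of_int q)"
    and "Eset (real_of_int p / real_of_int q) =
      limit_set (\<lambda>n. odd n = False) (real_of_int p / real_of_int q)"
    by (simp_all add: Oset_def Eset_def)
  then show ?thesis
    unfolding limit_set_eq limit_arguments_odd[OF \<open>odd q\<close>] limit_arguments_even[OF \<open>odd q\<close>]
      setcompr_eq_image Collect_mem_eq image_image
    by simp
qed

end
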